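(* Let $\alpha_2,\alpha_3\le0$ and $\alpha_1\le\alpha_2^2/4$ be real. Let $\mathbf{x}=(x_s)\in(\mathbb{R}_{>0})^{\mathbb{Z}}$ satisfy, for all $v\in\mathbb{Z}$ (with $z_i=x_{v+i}$), $$z_0^2z_3^2+\alpha_1z_1^2z_2^2+\alpha_2z_0z_1z_2z_3+\alpha_3(z_0z_2^3+z_1^3z_3)=0,$$ and assume moreover that $z_3$ is the larger of the two real solutions of this equation, i.e. $z_3=\dfrac{-\alpha_3z_1^3-\alpha_2z_0z_1z_2+\sqrt D}{2z_0^2}$ with $D=\alpha_3^2z_1^6+2\alpha_2\alpha_3z_0z_1^4z_2+(\alpha_2^2-4\alpha_1)z_0^2z_1^2z_2^2-4\alpha_3z_0^3z_2^3$. Then for all $v\in\mathbb{Z}$, $$2z_0^2z_3+\alpha_2z_0z_1z_2+\alpha_3z_1^3=2z_{-1}z_2^2+\alpha_2z_0z_1z_2+\alpha_3z_1^3,$$ equivalently $z_0^2z_3=z_{-1}z_2^2$. *)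

theory Defs
  imports Complex_Main
begin

end

theory Submission
  imports Defs
begin

text \<open>Write \<open>Q(z\<^sub>0,z\<^sub>1,z\<^sub>2,z\<^sub>3)\<close> for the left-hand side of the relation. It is a quadratic in \<open>z\<^sub>3\<close>
  whose larger root is characterised by \<open>\<partial>Q/\<partial>z\<^sub>3 \<ge> 0\<close>, and it is invariant under reversal
  \<open>(z\<^sub>0,z\<^sub>1,z\<^sub>2,z\<^sub>3) \<mapsto> (z\<^sub>3,z\<^sub>2,z\<^sub>1,z\<^sub>0)\<close> and, up to a factor, under the torus action
  \<open>z\<^sub>k \<mapsto> s t\<^sup>k z\<^sub>k\<close>. The sign conditions on the \<open>\<alpha>\<^sub>i\<close> make reversal preserve the
  larger-root condition. Reversing the relation at \<open>v - 1\<close> and rescaling by \<open>s = z\<^sub>2/z\<^sub>0\<close>,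
  \<open>t = z\<^sub>0/z\<^sub>2\<close> then exhibits \<open>z\<^sub>-\<^sub>1 z\<^sub>2\<^sup>2 / z\<^sub>0\<^sup>2\<close> as a larger root of the relation at \<open>v\<close>,
  so it equals \<open>z\<^sub>3\<close>.\<close>

locale quartic_recurrence =
  fixes \<alpha>1 \<alpha>2 \<alpha>3 :: real
begin

definition quartic :: "real \<Rightarrow> real \<Rightarrow> real \<Rightarrow> real \<Rightarrow> real" where
  "quartic z0 z1 z2 z3 = z0^2 * z3^2 + \<alpha>1 * z1^2 * z2^2 + \<alpha>2 * z0 * z1 * z2 * z3
     + \<alpha>3 * (z0 * z2^3 + z1^3 * z3)"

definition quartic_deriv :: "real \<Rightarrow> real \<Rightarrow> real \<Rightarrow> real \<Rightarrow> real" where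
  "quartic_deriv z0 z1 z2 z3 = 2 * z0^2 * z3 + \<alpha>2 * z0 * z1 * z2 + \<alpha>3 * z1^3"

lemma quartic_reverse: "quartic z3 z2 z1 z0 = quartic z0 z1 z2 z3"
  unfolding quartic_def by (simp add: algebra_simps)

lemma quartic_scale:
  "quartic (s * z0) (s * t * z1) (s * t^2 * z2) (s * t^3 * z3) = s^4 * t^6 * quartic z0 z1 z2 z3"
  unfolding quartic_def by (simp add: algebra_simps power2_eq_square power3_eq_cube power4_eq_xxxx)
    (simp add: power_def numeral_eq_Suc algebra_simps)

lemma quartic_deriv_scale:
  "quartic_deriv (s * z0) (s * t * z1) (s * t^2 * z2) (s * t^3 * z3)
     = s^3 * t^3 * quartic_deriv z0 z1 z2 z3"
  unfolding quartic_deriv_def by (simp add: algebra_simps power2_eq_square power3_eq_cube)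

lemma quartic_diff:
  "quartic z0 z1 z2 z3 - quartic z0 z1 z2 y
     = (z3 - y) * (quartic_deriv z0 z1 z2 z3 + quartic_deriv z0 z1 z2 y) / 2"
  unfolding quartic_def quartic_deriv_def by (simp add: algebra_simps power2_eq_square)

definition discriminant :: "real \<Rightarrow> real \<Rightarrow> real \<Rightarrow> real" where
  "discriminant z0 z1 z2 = \<alpha>3^2 * z1^6 + 2 * \<alpha>2 * \<alpha>3 * z0 * z1^4 * z2
     + (\<alpha>2^2 - 4 * \<alpha>1) * z0^2 * z1^2 * z2^2 - 4 * \<alpha>3 * z0^3 * z2^3"

lemma discriminant_eq:
  "discriminant z0 z1 z2 = (quartic_deriv z0 z1 z2 z3)^2 - 4 * z0^2 * quartic z0 z1 z2 z3"
  unfolding discriminant_def quartic_def quartic_deriv_def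
  by (simp add: algebra_simps power2_eq_square power3_eq_cube)
    (simp add: power_def numeral_eq_Suc algebra_simps)

text \<open>The hypothesis \<open>Q = 0\<close> is needed because \<^const>\<open>sqrt\<close> of a negative number is negative.\<close>
lemma larger_root_deriv_nonneg:
  assumes "z0 \<noteq> 0" and "quartic z0 z1 z2 z3 = 0"
    and "z3 = (- \<alpha>3 * z1^3 - \<alpha>2 * z0 * z1 * z2 + sqrt (discriminant z0 z1 z2)) / (2 * z0^2)"
  shows "quartic_deriv z0 z1 z2 z3 \<ge> 0"
proof -
  have "quartic_deriv z0 z1 z2 z3 = sqrt (discriminant z0 z1 z2)"
    using assms(1,3) unfolding quartic_deriv_def by (simp add: field_simps)
  also have "\<dots> = \<bar>quartic_deriv z0 z1 z2 z3\<bar>"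
    using assms(2) by (simp add: discriminant_eq[of _ _ _ z3])
  finally show ?thesis by simp
qed

lemma larger_root_unique:
  assumes "z0 \<noteq> 0" and "quartic z0 z1 z2 z3 = 0" and "quartic z0 z1 z2 y = 0"
    and "quartic_deriv z0 z1 z2 z3 \<ge> 0" and "quartic_deriv z0 z1 z2 y \<ge> 0"
  shows "z3 = y"
proof (rule ccontr)
  assume "z3 \<noteq> y"
  with assms(2,3) have "quartic_deriv z0 z1 z2 z3 + quartic_deriv z0 z1 z2 y = 0"
    using quartic_diff[of z0 z1 z2 z3 y] by simp
  with assms(4,5) have "2 * z0^2 * z3 = 2 * z0^2 * y"
    unfolding quartic_deriv_def by linarith
  with \<open>z0 \<noteq> 0\<close> \<open>z3 \<noteq> y\<close> show False by simp
qed

lemma larger_root_reverse: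
  assumes "\<alpha>2 \<le> 0" and "\<alpha>3 \<le> 0" and "\<alpha>1 \<le> \<alpha>2^2 / 4"
    and "z0 > 0" "z1 > 0" "z2 > 0" "z3 > 0"
    and root: "quartic z0 z1 z2 z3 = 0" and larger: "quartic_deriv z0 z1 z2 z3 \<ge> 0"
  shows "quartic_deriv z3 z2 z1 z0 \<ge> 0"
proof -
  define p q u t where "p = z0 * z3" and "q = z1 * z2"
    and "u = \<alpha>3 * z0 * z2^3" and "t = \<alpha>3 * z1^3 * z3"
  have "p > 0" "q > 0" using assms(4-7) by (simp_all add: p_def q_def)
  have "u \<le> 0" "t \<le> 0"
    using assms(2,4-7) by (simp_all add: u_def t_def mult_nonpos_nonneg)
  have root': "p^2 + \<alpha>2 * p * q + \<alpha>1 * q^2 + u + t = 0"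
    using root unfolding quartic_def p_def q_def u_def t_def
    by (simp add: algebra_simps power2_eq_square)
  have "z3 * quartic_deriv z0 z1 z2 z3 = 2 * p^2 + \<alpha>2 * p * q + t"
    unfolding quartic_deriv_def p_def q_def t_def by (simp add: algebra_simps power2_eq_square)
  moreover have "z3 * quartic_deriv z0 z1 z2 z3 \<ge> 0"
    using larger \<open>z3 > 0\<close> by simp
  ultimately have "p * (2 * p + \<alpha>2 * q) \<ge> 0"
    using \<open>t \<le> 0\<close> by (simp add: algebra_simps power2_eq_square)
  with \<open>p > 0\<close> have "- \<alpha>2 * q \<le> 2 * p"
    by (simp add: zero_le_mult_iff)
  with \<open>\<alpha>2 \<le> 0\<close> \<open>q > 0\<close> have "(- \<alpha>2 * q)^2 \<le> (2 * p)^2"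
    by (intro power_mono) (auto simp: mult_nonpos_nonneg)
  moreover have "\<alpha>1 * q^2 \<le> \<alpha>2^2 / 4 * q^2"
    using assms(3) by (intro mult_right_mono) auto
  ultimately have "\<alpha>1 * q^2 \<le> p^2"
    by (simp add: power_mult_distrib)
  \<comment> \<open>By the relation, \<open>z\<^sub>0 \<cdot> \<partial>Q/\<partial>z\<^sub>0 = p\<^sup>2 - \<alpha>\<^sub>1 q\<^sup>2 - t\<close>.\<close>
  moreover have "z0 * quartic_deriv z3 z2 z1 z0 = 2 * p^2 + \<alpha>2 * p * q + u"
    unfolding quartic_deriv_def p_def q_def u_def by (simp add: algebra_simps power2_eq_square)
  ultimately have "z0 * quartic_deriv z3 z2 z1 z0 \<ge> 0"
    using root' \<open>t \<le> 0\<close> by linarith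
  with \<open>z0 > 0\<close> show ?thesis by (simp add: zero_le_mult_iff)
qed

lemma larger_root_shift:
  assumes "\<alpha>2 \<le> 0" and "\<alpha>3 \<le> 0" and "\<alpha>1 \<le> \<alpha>2^2 / 4"
    and "w > 0" "a > 0" "b > 0" "c > 0"
    and root: "quartic w a b c = 0" and larger: "quartic_deriv w a b c \<ge> 0"
  defines "y \<equiv> w * c^2 / a^2"
  shows "quartic a b c y = 0" and "quartic_deriv a b c y \<ge> 0"
proof -
  define s t where "s = c / a" and "t = a / c"
  have st: "c = s * a" "b = s * t * b" "a = s * t^2 * c" "w = s * t^3 * y"
    using assms(5,7) by (simp_all add: s_def t_def y_def field_simps power2_eq_square power3_eq_cube)
  have "s > 0" "t > 0" using assms(5,7) by (simp_all add: s_def t_def)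
  have "s^4 * t^6 * quartic a b c y = 0"
    using root quartic_scale[of s a t b c y] by (simp add: quartic_reverse flip: st)
  with \<open>s > 0\<close> \<open>t > 0\<close> show "quartic a b c y = 0" by simp
  have "quartic_deriv c b a w \<ge> 0"
    using larger_root_reverse[OF assms(1-7) root larger] .
  then have "s^3 * t^3 * quartic_deriv a b c y \<ge> 0"
    using quartic_deriv_scale[of s a t b c y] by (simp flip: st)
  with \<open>s > 0\<close> \<open>t > 0\<close> show "quartic_deriv a b c y \<ge> 0"
    by (metis mult_pos_pos zero_less_power zero_le_mult_iff not_le)
qed

end

theorem theorem6p3:
  fixes \<alpha>1 \<alpha>2 \<alpha>3 :: real and x :: "int \<Rightarrow> real"
  assumes a2: "\<alpha>2 \<le> 0" and a3: "\<alpha>3 \<le> 0" and a1: "\<alpha>1 \<le> \<alpha>2^2 / 4"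
    and pos: "\<And>s. x s > 0"
    and eqn: "\<And>v. (x v)^2 * (x (v+3))^2 + \<alpha>1 * (x (v+1))^2 * (x (v+2))^2
                + \<alpha>2 * x v * x (v+1) * x (v+2) * x (v+3)
                + \<alpha>3 * (x v * (x (v+2))^3 + (x (v+1))^3 * x (v+3)) = 0"
    and larger: "\<And>v. x (v+3) =
       (- \<alpha>3 * (x (v+1))^3 - \<alpha>2 * x v * x (v+1) * x (v+2)
        + sqrt (\<alpha>3^2 * (x (v+1))^6 + 2 * \<alpha>2 * \<alpha>3 * x v * (x (v+1))^4 * x (v+2)
                + (\<alpha>2^2 - 4 * \<alpha>1) * (x v)^2 * (x (v+1))^2 * (x (v+2))^2
                - 4 * \<alpha>3 * (x v)^3 * (x (v+2))^3)) / (2 * (x v)^2)"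
  shows "\<forall>v. 2 * (x v)^2 * x (v+3) + \<alpha>2 * x v * x (v+1) * x (v+2) + \<alpha>3 * (x (v+1))^3
           = 2 * x (v-1) * (x (v+2))^2 + \<alpha>2 * x v * x (v+1) * x (v+2) + \<alpha>3 * (x (v+1))^3"
proof
  fix v :: int
  interpret quartic_recurrence \<alpha>1 \<alpha>2 \<alpha>3 .
  have root: "quartic (x u) (x (u+1)) (x (u+2)) (x (u+3)) = 0" for u
    using eqn unfolding quartic_def .
  have is_larger: "quartic_deriv (x u) (x (u+1)) (x (u+2)) (x (u+3)) \<ge> 0" for u
    using larger_root_deriv_nonneg[OF _ root] larger pos[of u] unfolding discriminant_def by simp
  have shift: "v - 1 + 1 = v" "v - 1 + 2 = v + 1" "v - 1 + 3 = v + 2" by simp_all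
  define y where "y = x (v-1) * (x (v+2))^2 / (x v)^2"
  have y_root: "quartic (x v) (x (v+1)) (x (v+2)) y = 0"
    and y_larger: "quartic_deriv (x v) (x (v+1)) (x (v+2)) y \<ge> 0"
    using larger_root_shift[OF a2 a3 a1 pos pos pos pos, of "v-1"] root[of "v-1"]
      is_larger[of "v-1"] unfolding shift y_def by auto
  have "x v \<noteq> 0" using pos[of v] by simp
  from this root[of v] y_root is_larger[of v] y_larger have "x (v+3) = y"
    by (rule larger_root_unique)
  then show "2 * (x v)^2 * x (v+3) + \<alpha>2 * x v * x (v+1) * x (v+2) + \<alpha>3 * (x (v+1))^3
           = 2 * x (v-1) * (x (v+2))^2 + \<alpha>2 * x v * x (v+1) * x (v+2) + \<alpha>3 * (x (v+1))^3"
    using pos[of v] by (simp add: y_def)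
qed

end
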